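(* Let $p,q$ be positive integers with $p/q\ge4$, let $k=\lfloor p/q\rfloor$ and $r=p-kq$, and assume $r\ge1$. Let $t$ be the smallest positive integer with $(t+1)q\equiv r\pmod p$. Consider a graph containing an edge $uv$ together with two paths $P_{uv}=u\,x_0^{uv}x_1^{uv}\cdots x_t^{uv}\,v$ and $P_{vu}=v\,x_0^{vu}x_1^{vu}\cdots x_t^{vu}\,u$. Assign lists $L(x_0^{ab})=L(x_t^{ab})=[p-1,2q-1]$ and $L(x_i^{ab})=[iq,(i+2)q-1]$ for $1\le i\le t-1$, for $(a,b)\in\{(u,v),(v,u)\}$. If $\psi$ is a $(p,q)$-colouring of $P_{uv}\cup P_{vu}$ (including the edge $uv$) such that $\psi(x)\in L(x)$ for every internal vertex $x$ of the two paths, then $\psi(u)$ and $\psi(v)$ are not both contained in $S_0=[0,q+r-1]$.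
   Context: A $(p,q)$-colouring of a graph is a map $\psi$ from its vertex set to $\{0,\dots,p-1\}$ with $q\le|\psi(x)-\psi(y)|\le p-q$ for every edge $xy$. For $a,b\in\{0,\dots,p-1\}$ the interval $[a,b]$ denotes $\{a,a+1,\dots,b\}$ with arithmetic modulo $p$ (so e.g. $[p-1,2q-1]=\{p-1,0,1,\dots,2q-1\}$); all numbers appearing as interval endpoints are reduced modulo $p$. *)

theory Defs
  imports Main
begin

text \<open>Cyclic interval [a,b] modulo p: {a, a+1, ..., b} with arithmetic mod p,
  endpoints reduced mod p.\<close>
definition cyc_interval :: "nat \<Rightarrow> nat \<Rightarrow> nat \<Rightarrow> nat set" where
  "cyc_interval p a b =
     {(a mod p + j) mod p | j. j \<le> (b mod p + p - a mod p) mod p}"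

definition pq_edge_ok :: "nat \<Rightarrow> nat \<Rightarrow> nat \<Rightarrow> nat \<Rightarrow> bool" where
  "pq_edge_ok p q x y \<longleftrightarrow>
     int q \<le> \<bar>int x - int y\<bar> \<and> \<bar>int x - int y\<bar> \<le> int p - int q"

end

theory Submission imports Defs begin

text \<open>Lift colours to integers modulo \<open>p\<close>. All integer representatives of the two ends of an
  edge are at distance at least \<open>q\<close>, so a representative lying less than \<open>q\<close> below the next one
  forces that one to lie at least \<open>q\<close> above it. On a path from \<open>c\<^sub>1\<close> to \<open>c\<^sub>2\<close> with
  \<open>c\<^sub>1 + q \<le> c\<^sub>2 \<le> q + r - 1\<close>, the lists \<open>[p-1, 2q-1] \<equiv> [-1, 2q-1]\<close> and \<open>[iq, (i+2)q-1]\<close> therefore make the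
  representatives climb, and \<open>x\<^sub>t\<^sub>-\<^sub>1\<close> has one in \<open>[c\<^sub>1 + tq, (t+1)q-1]\<close>. Subtracting
  \<open>(t+1)q \<equiv> r\<close> moves it to \<open>[c\<^sub>1+r-q, r-1]\<close>, which pushes \<open>x\<^sub>t\<close> to at least \<open>c\<^sub>1 + r\<close> and then
  \<open>c\<^sub>2\<close> to at least \<open>c\<^sub>1 + r + q > c\<^sub>2\<close>. The edge \<open>uv\<close> provides such a pair \<open>c\<^sub>1, c\<^sub>2\<close>, joined by
  one of the two paths.\<close>

lemma pq_edge_ok_congruent_dist:
  assumes edge: "pq_edge_ok p q x y"
    and x: "int x mod int p = a mod int p" and y: "int y mod int p = b mod int p"
  shows "int q \<le> \<bar>a - b\<bar>"
proof -
  have "(int x - int y) mod int p = (a - b) mod int p"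
    using x y by (metis mod_diff_cong)
  then obtain j where j: "int x - int y - (a - b) = int p * j"
    by (metis dvd_def mod_eq_dvd_iff)
  have e: "int q \<le> \<bar>int x - int y\<bar>" "\<bar>int x - int y\<bar> \<le> int p - int q"
    using edge unfolding pq_edge_ok_def by auto
  show ?thesis
  proof (cases "j = 0")
    case True
    then show ?thesis using j e by simp
  next
    case False
    then have "int p * 1 \<le> int p * \<bar>j\<bar>" by (intro mult_left_mono) auto
    then have "int p \<le> \<bar>int p * j\<bar>" by (simp add: abs_mult)
    then show ?thesis using j e by linarith
  qed
qed

lemma pq_edge_ok_congruent_step:
  assumes "pq_edge_ok p q x y"
    and "int x mod int p = a mod int p" "int y mod int p = b mod int p"
    and "a - int q < b"
  shows "a + int q \<le> b"
  using pq_edge_ok_congruent_dist[OF assms(1-3)] assms(4) by linarith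

lemma cyc_interval_rep:
  assumes "x \<in> cyc_interval p a b" and lo: "int a mod int p = lo mod int p"
  shows "\<exists>y. lo \<le> y \<and> y \<le> lo + int ((b mod p + p - a mod p) mod p)
    \<and> int x mod int p = y mod int p"
proof -
  obtain j where j: "j \<le> (b mod p + p - a mod p) mod p" "x = (a mod p + j) mod p"
    using assms(1) unfolding cyc_interval_def by auto
  have "int x mod int p = (int a + int j) mod int p"
    using j(2) by (metis mod_add_left_eq mod_mod_trivial of_nat_add zmod_int)
  also have "\<dots> = (lo + int j) mod int p"
    using lo by (metis mod_add_left_eq)
  finally show ?thesis using j(1) by (intro exI[of _ "lo + int j"]) auto
qed

lemma cyc_length_add:
  fixes a d p :: nat
  assumes "d < p"
  shows "((a + d) mod p + p - a mod p) mod p = d"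
proof (cases "a mod p + d < p")
  case True
  then have "(a + d) mod p = a mod p + d"
    by (metis mod_add_left_eq mod_less)
  then show ?thesis using assms by simp
next
  case False
  have "a mod p < p" using assms by simp
  have "(a + d) mod p = (a mod p + d) mod p" by (simp add: mod_add_left_eq)
  also have "\<dots> = (a mod p + d - p) mod p" using False by (simp add: le_mod_geq)
  also have "\<dots> = a mod p + d - p" using \<open>a mod p < p\<close> assms by (intro mod_less) linarith
  finally show ?thesis using False assms by simp
qed

lemma cyc_interval_window_rep:
  assumes "x \<in> cyc_interval p a (a + d)" "d < p"
  shows "\<exists>y. int a \<le> y \<and> y \<le> int a + int d \<and> int x mod int p = y mod int p"
  using cyc_interval_rep[OF assms(1) refl] cyc_length_add[OF assms(2)] by simp

lemma cyc_interval_wrap_rep: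
  assumes "x \<in> cyc_interval p (p - 1) b" "b + 1 < p"
  shows "\<exists>y. -1 \<le> y \<and> y \<le> int b \<and> int x mod int p = y mod int p"
proof -
  have "int (p - 1) = -1 + int p" using assms(2) by simp
  then have "int (p - 1) mod int p = -1 mod int p" by simp
  moreover have "(b mod p + p - (p - 1) mod p) mod p = b + 1" using assms(2) by simp
  ultimately show ?thesis using cyc_interval_rep[OF assms(1)] by fastforce
qed

lemma cyc_interval_zero:
  assumes "b < p"
  shows "cyc_interval p 0 b = {..b}"
proof -
  have "cyc_interval p 0 b = {j mod p | j. j \<le> b}"
    using assms unfolding cyc_interval_def by simp
  also have "\<dots> = {..b}"
    using assms by force
  finally show ?thesis .
qed

lemma listed_path_reps_ascend:
  fixes x :: "nat \<Rightarrow> nat"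
  assumes q: "0 < q" and pq: "2 * q < p" and c: "c + 1 < q"
    and e0: "pq_edge_ok p q c (x 0)"
    and es: "\<forall>i<t. pq_edge_ok p q (x i) (x (Suc i))"
    and l0: "x 0 \<in> cyc_interval p (p - 1) (2 * q - 1)"
    and li: "\<forall>i. 1 \<le> i \<and> i \<le> t - 1 \<longrightarrow> x i \<in> cyc_interval p (i * q) ((i + 2) * q - 1)"
  shows "i < t \<Longrightarrow> \<exists>y. int c + int (i + 1) * int q \<le> y \<and> y \<le> int (i + 2) * int q - 1
    \<and> int (x i) mod int p = y mod int p"
proof (induction i)
  case 0
  obtain z where z: "-1 \<le> z" "z \<le> 2 * int q - 1" "int (x 0) mod int p = z mod int p"
    using cyc_interval_wrap_rep[OF l0] q pq by fastforce
  have "int c + int q \<le> z"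
    by (rule pq_edge_ok_congruent_step[OF e0 refl z(3)]) (use z c in linarith)
  then show ?case using z by auto
next
  case (Suc i)
  then obtain y where y: "int c + int (i + 1) * int q \<le> y" "y \<le> int (i + 2) * int q - 1"
      "int (x i) mod int p = y mod int p" by auto
  have "x (Suc i) \<in> cyc_interval p (Suc i * q) ((Suc i + 2) * q - 1)"
    using Suc.prems by (intro li[rule_format]) simp
  moreover have "(Suc i + 2) * q - 1 = Suc i * q + (2 * q - 1)" using q by (simp add: algebra_simps)
  ultimately have "x (Suc i) \<in> cyc_interval p (Suc i * q) (Suc i * q + (2 * q - 1))" by simp
  moreover have "2 * q - 1 < p" using q pq by linarith
  ultimately obtain z where z: "int (Suc i * q) \<le> z" "z \<le> int (Suc i * q) + int (2 * q - 1)"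
      "int (x (Suc i)) mod int p = z mod int p"
    using cyc_interval_window_rep by blast
  have "y + int q \<le> z"
    by (rule pq_edge_ok_congruent_step[OF _ y(3) z(3)]) (use es Suc.prems y z in \<open>auto simp: algebra_simps\<close>)
  then show ?case using y z q by (intro exI[of _ z]) (auto simp: algebra_simps)
qed

lemma no_listed_path_up_within_S0:
  fixes x :: "nat \<Rightarrow> nat"
  assumes q: "0 < q" and pq: "2 * q < p" and r: "r < q" and t: "0 < t"
    and cong: "(t + 1) * q mod p = r mod p"
    and c12: "c1 + q \<le> c2" and c2: "c2 \<le> q + r - 1"
    and e0: "pq_edge_ok p q c1 (x 0)"
    and es: "\<forall>i<t. pq_edge_ok p q (x i) (x (Suc i))"
    and et: "pq_edge_ok p q (x t) c2"
    and l0: "x 0 \<in> cyc_interval p (p - 1) (2 * q - 1)"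
    and lt: "x t \<in> cyc_interval p (p - 1) (2 * q - 1)"
    and li: "\<forall>i. 1 \<le> i \<and> i \<le> t - 1 \<longrightarrow> x i \<in> cyc_interval p (i * q) ((i + 2) * q - 1)"
  shows False
proof -
  have "c1 + 1 < q" using c12 c2 r q by linarith
  then obtain y where y: "int c1 + int t * int q \<le> y" "y \<le> int (t + 1) * int q - 1"
      "int (x (t - 1)) mod int p = y mod int p"
    using listed_path_reps_ascend[OF q pq _ e0 es l0 li, of "t - 1"] t by auto
  define w where "w = y - int ((t + 1) * q) + int r"
  have "int ((t + 1) * q) mod int p = int r mod int p"
    using cong by (metis of_nat_mod)
  then have "w mod int p = y mod int p"
    unfolding w_def by algebra
  then have w: "int (x (t - 1)) mod int p = w mod int p" using y(3) by simp
  obtain z where z: "-1 \<le> z" "z \<le> 2 * int q - 1" "int (x t) mod int p = z mod int p"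
    using cyc_interval_wrap_rep[OF lt] q pq by fastforce
  have "pq_edge_ok p q (x (t - 1)) (x t)" using es t
    by (metis Suc_diff_1 diff_less zero_less_one)
  then have "w + int q \<le> z"
    by (rule pq_edge_ok_congruent_step[OF _ w z(3)]) (use y z r in \<open>simp add: w_def algebra_simps\<close>)
  moreover have "z + int q \<le> int c2"
    by (rule pq_edge_ok_congruent_step[OF et z(3) refl]) (use z c12 in simp)
  ultimately show False using y c2 q r by (auto simp: w_def algebra_simps)
qed

theorem proposition3p2:
  fixes p q k r t :: nat
    and cu cv :: nat
    and xuv xvu :: "nat \<Rightarrow> nat"
  assumes q_pos: "0 < q"
    and ratio: "4 * q \<le> p"
    and k_def: "k = p div q"
    and r_def: "r = p - k * q"
    and r_pos: "1 \<le> r"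
    and t_pos: "0 < t"
    and t_cong: "(t + 1) * q mod p = r mod p"
    and t_min: "\<forall>s. 0 < s \<and> s < t \<longrightarrow> (s + 1) * q mod p \<noteq> r mod p"
    and range: "cu < p" "cv < p" "\<forall>i\<le>t. xuv i < p \<and> xvu i < p"
    and edge_uv: "pq_edge_ok p q cu cv"
    and path_uv: "pq_edge_ok p q cu (xuv 0)"
      "\<forall>i<t. pq_edge_ok p q (xuv i) (xuv (Suc i))"
      "pq_edge_ok p q (xuv t) cv"
    and path_vu: "pq_edge_ok p q cv (xvu 0)"
      "\<forall>i<t. pq_edge_ok p q (xvu i) (xvu (Suc i))"
      "pq_edge_ok p q (xvu t) cu"
    and lists_uv: "xuv 0 \<in> cyc_interval p (p - 1) (2 * q - 1)"
      "xuv t \<in> cyc_interval p (p - 1) (2 * q - 1)"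
      "\<forall>i. 1 \<le> i \<and> i \<le> t - 1 \<longrightarrow> xuv i \<in> cyc_interval p (i * q) ((i + 2) * q - 1)"
    and lists_vu: "xvu 0 \<in> cyc_interval p (p - 1) (2 * q - 1)"
      "xvu t \<in> cyc_interval p (p - 1) (2 * q - 1)"
      "\<forall>i. 1 \<le> i \<and> i \<le> t - 1 \<longrightarrow> xvu i \<in> cyc_interval p (i * q) ((i + 2) * q - 1)"
  shows "\<not> (cu \<in> cyc_interval p 0 (q + r - 1) \<and> cv \<in> cyc_interval p 0 (q + r - 1))"
proof
  assume "cu \<in> cyc_interval p 0 (q + r - 1) \<and> cv \<in> cyc_interval p 0 (q + r - 1)"
  have r: "r < q" using r_def k_def q_pos by (simp add: minus_div_mult_eq_mod)
  have p: "2 * q < p" using q_pos ratio by linarith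
  with r have "cyc_interval p 0 (q + r - 1) = {..q + r - 1}"
    by (intro cyc_interval_zero) linarith
  then have cu: "cu \<le> q + r - 1" and cv: "cv \<le> q + r - 1"
    using \<open>cu \<in> _ \<and> cv \<in> _\<close> by auto
  have "int q \<le> \<bar>int cu - int cv\<bar>" using edge_uv unfolding pq_edge_ok_def by simp
  then consider "cu + q \<le> cv" | "cv + q \<le> cu" by linarith
  then show False
  proof cases
    case 1
    show False
      using no_listed_path_up_within_S0[OF q_pos p r t_pos t_cong 1 cv path_uv lists_uv] .
  next
    case 2
    show False
      using no_listed_path_up_within_S0[OF q_pos p r t_pos t_cong 2 cu path_vu lists_vu] .
  qed
qed

end
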